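(* Let $G=(V,E)$ be a simple biconnected graph and let $w$ be a vertex such that the set $F$ of edges of $G-w$ is a flacet of the graphic matroid $\mathcal{M}(G)$. Then $F$ is $k$-level if and only if $\deg(w)=k$.
   Context: The graphic matroid $\mathcal{M}(G)$ has ground set $E$ and bases the spanning forests (spanning trees, for connected $G$). A flacet of a matroid $\mathcal{M}$ on $E$ is a flat $\emptyset\neq S\subsetneq E$ (i.e. $\operatorname{rk}(S)<\operatorname{rk}(S\cup e)$ for all $e\notin S$) such that the restriction $\mathcal{M}|_S$ and the contraction $\mathcal{M}/S$ are connected matroids. A flacet $F$ is $k$-level if the function $\ell_F(x)=\sum_{e\in F}x_e$ takes exactly $k$ distinct values on the base configuration $\{\mathbf{1}_B: B \text{ a basis}\}\subset\mathbb{R}^E$. *)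

theory Defs
  imports Complex_Main
begin

definition simple_graph :: "'v set \<Rightarrow> 'v set set \<Rightarrow> bool" where
  "simple_graph V E \<longleftrightarrow> finite V \<and>
     (\<forall>e\<in>E. \<exists>u v. e = {u, v} \<and> u \<noteq> v \<and> u \<in> V \<and> v \<in> V)"

definition reach :: "'v set set \<Rightarrow> 'v \<Rightarrow> 'v \<Rightarrow> bool" where
  "reach A = (\<lambda>u v. {u, v} \<in> A)\<^sup>*\<^sup>*"

definition graph_connected :: "'v set \<Rightarrow> 'v set set \<Rightarrow> bool" where
  "graph_connected V E \<longleftrightarrow> (\<forall>u\<in>V. \<forall>v\<in>V. reach E u v)"

definition edges_avoiding :: "'v set set \<Rightarrow> 'v \<Rightarrow> 'v set set" where
  "edges_avoiding E w = {e\<in>E. w \<notin> e}"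

definition biconnected :: "'v set \<Rightarrow> 'v set set \<Rightarrow> bool" where
  "biconnected V E \<longleftrightarrow> card V \<ge> 3 \<and> graph_connected V E \<and>
     (\<forall>w\<in>V. graph_connected (V - {w}) (edges_avoiding E w))"

definition degree :: "'v set set \<Rightarrow> 'v \<Rightarrow> nat" where
  "degree E w = card {e\<in>E. w \<in> e}"

text \<open>A forest: an edge set containing no cycle, i.e. no edge whose endpoints are
  still joined after removing it.\<close>
definition forest :: "'v set set \<Rightarrow> bool" where
  "forest A \<longleftrightarrow> (\<forall>e\<in>A. \<forall>u v. e = {u, v} \<longrightarrow> \<not> reach (A - {e}) u v)"

definition graphic_basis :: "'v set set \<Rightarrow> 'v set set \<Rightarrow> bool" where
  "graphic_basis E B \<longleftrightarrow> B \<subseteq> E \<and> forest B \<and> (\<forall>e\<in>E - B. \<not> forest (insert e B))"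

definition graphic_rank :: "'v set set \<Rightarrow> nat" where
  "graphic_rank A = Max {card B | B. B \<subseteq> A \<and> forest B}"

definition m_indep :: "('a set \<Rightarrow> nat) \<Rightarrow> 'a set \<Rightarrow> bool" where
  "m_indep r A \<longleftrightarrow> r A = card A"

definition m_circuit :: "'a set \<Rightarrow> ('a set \<Rightarrow> nat) \<Rightarrow> 'a set \<Rightarrow> bool" where
  "m_circuit X r C \<longleftrightarrow> C \<subseteq> X \<and> \<not> m_indep r C \<and> (\<forall>D. D \<subset> C \<longrightarrow> m_indep r D)"

definition m_connected :: "'a set \<Rightarrow> ('a set \<Rightarrow> nat) \<Rightarrow> bool" where
  "m_connected X r \<longleftrightarrow>
     (\<forall>e\<in>X. \<forall>f\<in>X. e \<noteq> f \<longrightarrow> (\<exists>C. m_circuit X r C \<and> e \<in> C \<and> f \<in> C))"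

definition m_flat :: "'a set \<Rightarrow> ('a set \<Rightarrow> nat) \<Rightarrow> 'a set \<Rightarrow> bool" where
  "m_flat X r S \<longleftrightarrow> S \<subseteq> X \<and> (\<forall>e\<in>X - S. r S < r (insert e S))"

text \<open>Restriction M|S has ground set S and the same rank; contraction M/S has ground
  set X - S and rank A \<mapsto> r(A \<union> S) - r(S).\<close>
definition m_flacet :: "'a set \<Rightarrow> ('a set \<Rightarrow> nat) \<Rightarrow> 'a set \<Rightarrow> bool" where
  "m_flacet X r S \<longleftrightarrow> S \<noteq> {} \<and> S \<subset> X \<and> m_flat X r S \<and>
     m_connected S r \<and> m_connected (X - S) (\<lambda>A. r (A \<union> S) - r S)"

definition graphic_k_level :: "'v set set \<Rightarrow> 'v set set \<Rightarrow> nat \<Rightarrow> bool" where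
  "graphic_k_level E F k \<longleftrightarrow>
     card ((\<lambda>B. \<Sum>e\<in>F. (if e \<in> B then 1 else 0 :: real)) ` {B. graphic_basis E B}) = k"

end

theory Submission
  imports Defs
begin

text \<open>
  Let \<open>D\<close> be the set of edges at \<open>w\<close> and \<open>F\<close> the edges of \<open>G - w\<close>. Every spanning tree
  \<open>B\<close> of the connected graph \<open>G\<close> has \<open>|V| - 1\<close> edges, so \<open>\<ell>\<^sub>F(B) = |B \<inter> F| = |V| - 1 - |B \<inter> D|\<close>.
  A spanning tree cannot isolate \<open>w\<close>, so \<open>|B \<inter> D| \<ge> 1\<close>. Conversely any nonempty \<open>T \<subseteq> D\<close> is a
  forest, and since \<open>G - w\<close> is connected it extends by edges of \<open>F\<close> alone to a spanning tree
  \<open>B\<close> with \<open>B \<inter> D = T\<close>. Hence \<open>\<ell>\<^sub>F\<close> takes exactly the \<open>deg w\<close> values \<open>|V| - 1 - j\<close>,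
  \<open>1 \<le> j \<le> deg w\<close>.
\<close>

lemma simple_graph_finite_edges: "simple_graph V E \<Longrightarrow> finite E"
  unfolding simple_graph_def by (rule finite_subset[of E "Pow V"]) auto

lemma simple_graph_subset: "simple_graph V E \<Longrightarrow> A \<subseteq> E \<Longrightarrow> simple_graph V A"
  unfolding simple_graph_def by blast

lemma simple_graph_edge:
  assumes "simple_graph V E" "{a, b} \<in> E"
  shows "a \<noteq> b \<and> a \<in> V \<and> b \<in> V"
proof -
  obtain p q where "{a, b} = {p, q}" "p \<noteq> q" "p \<in> V" "q \<in> V"
    using assms unfolding simple_graph_def by blast
  then show ?thesis
    by (auto simp: doubleton_eq_iff)
qed

lemma simple_graph_edge_at:
  assumes "simple_graph V E" "e \<in> E" "w \<in> e"
  obtains x where "e = {w, x}" "x \<noteq> w" "x \<in> V"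
proof -
  obtain a b where "e = {a, b}" "a \<noteq> b" "a \<in> V" "b \<in> V"
    using assms(1,2) unfolding simple_graph_def by blast
  then show ?thesis
    using assms(3) that[of b] that[of a] by (auto simp: insert_commute)
qed

section \<open>Reachability\<close>

lemma reach_refl [simp]: "reach A x x"
  by (simp add: reach_def)

lemma reach_edge: "{u, v} \<in> A \<Longrightarrow> reach A u v"
  by (auto simp: reach_def)

lemma reach_trans: "reach A x y \<Longrightarrow> reach A y z \<Longrightarrow> reach A x z"
  by (auto simp: reach_def)

lemma reach_sym: "reach A x y \<Longrightarrow> reach A y x"
  unfolding reach_def by (rule sympD[OF symp_rtranclp]) (auto intro: sympI simp: insert_commute)

lemma reach_mono: "reach A x y \<Longrightarrow> A \<subseteq> A' \<Longrightarrow> reach A' x y"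
  unfolding reach_def by (erule mono_rtranclp[rule_format, rotated]) auto

lemma reach_cong: "reach A x u \<Longrightarrow> reach A x y \<longleftrightarrow> reach A u y"
  using reach_trans reach_sym by metis

lemma reach_transfer:
  assumes "reach C x y" "\<And>a b. {a, b} \<in> C \<Longrightarrow> reach B a b"
  shows "reach B x y"
  using assms(1) unfolding reach_def[of C]
proof (induction rule: rtranclp_induct)
  case (step y z)
  then show ?case
    using reach_trans assms(2) by metis
qed simp

lemma reach_isolated: "\<forall>e\<in>A. x \<notin> e \<Longrightarrow> reach A x y \<Longrightarrow> y = x"
  unfolding reach_def by (erule converse_rtranclpE) auto

lemma reach_first_edge:
  assumes "reach A u v" "u \<noteq> v"
  obtains y where "{u, y} \<in> A"
  using assms unfolding reach_def by (auto elim: converse_rtranclpE)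

lemma reach_insert_edge_iff:
  "reach (insert {u, v} A) x y \<longleftrightarrow>
     reach A x y \<or> (reach A x u \<and> reach A v y) \<or> (reach A x v \<and> reach A u y)"
proof
  assume "reach (insert {u, v} A) x y"
  then show "reach A x y \<or> (reach A x u \<and> reach A v y) \<or> (reach A x v \<and> reach A u y)"
    unfolding reach_def[of "insert {u, v} A"]
  proof (induction rule: rtranclp_induct)
    case (step y z)
    then consider "y = u" "z = v" | "y = v" "z = u" | "reach A y z"
      by (auto simp: doubleton_eq_iff intro: reach_edge)
    then show ?case
      using step.IH by cases (metis reach_refl reach_trans)+
  qed simp
next
  have "reach (insert {u, v} A) u v"
    by (rule reach_edge) simp
  moreover have "reach A a b \<Longrightarrow> reach (insert {u, v} A) a b" for a b
    by (erule reach_mono) auto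
  ultimately show "reach A x y \<or> (reach A x u \<and> reach A v y) \<or> (reach A x v \<and> reach A u y)
      \<Longrightarrow> reach (insert {u, v} A) x y"
    by (meson reach_sym reach_trans)
qed

section \<open>Forests\<close>

lemma forestD: "forest A \<Longrightarrow> {u, v} \<in> A \<Longrightarrow> \<not> reach (A - {{u, v}}) u v"
  unfolding forest_def by blast

lemma forest_subset:
  assumes "forest A" "A' \<subseteq> A"
  shows "forest A'"
  unfolding forest_def
proof (intro ballI allI impI notI)
  fix e u v
  assume e: "e \<in> A'" "e = {u, v}" and r: "reach (A' - {e}) u v"
  have "reach (A - {e}) u v"
    using r by (rule reach_mono) (use assms(2) in blast)
  then show False
    using forestD[OF assms(1)] e assms(2) by blast
qed

lemma forest_insert_iff:
  assumes "forest A" "{u, v} \<notin> A"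
  shows "forest (insert {u, v} A) \<longleftrightarrow> \<not> reach A u v"
proof
  assume "forest (insert {u, v} A)"
  then show "\<not> reach A u v"
    using forestD[of "insert {u, v} A" u v] assms(2) by simp
next
  assume nr: "\<not> reach A u v"
  show "forest (insert {u, v} A)"
    unfolding forest_def
  proof (intro ballI allI impI notI)
    fix g a b
    assume g: "g \<in> insert {u, v} A" "g = {a, b}" and r: "reach (insert {u, v} A - {g}) a b"
    show False
    proof (cases "g = {u, v}")
      case True
      then have "reach A a b"
        by (intro reach_mono[OF r]) blast
      then show False
        using True g(2) nr reach_sym by (metis doubleton_eq_iff)
    next
      case False
      then have gA: "g \<in> A"
        using g(1) by simp
      have "reach (insert {u, v} (A - {g})) a b"
        using r False by (simp add: insert_Diff_if)
      moreover have "\<not> reach (A - {g}) a b"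
        using forestD[OF assms(1)] gA g(2) by blast
      moreover have "reach A a b"
        using gA g(2) by (simp add: reach_edge)
      moreover have "reach (A - {g}) s t \<Longrightarrow> reach A s t" for s t
        by (erule reach_mono) blast
      ultimately have "reach A u v"
        unfolding reach_insert_edge_iff by (metis reach_sym reach_trans)
      with nr show False
        by simp
    qed
  qed
qed

lemma forest_extend:
  assumes "finite X" "forest A"
  obtains B where "A \<subseteq> B" "B \<subseteq> A \<union> X" "forest B" "\<forall>a b. {a, b} \<in> A \<union> X \<longrightarrow> reach B a b"
proof -
  have "\<exists>B. A \<subseteq> B \<and> B \<subseteq> A \<union> X \<and> forest B \<and> (\<forall>a b. {a, b} \<in> A \<union> X \<longrightarrow> reach B a b)"
    using assms(1)
  proof (induction X rule: finite_induct)
    case empty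
    have "\<forall>a b. {a, b} \<in> A \<longrightarrow> reach A a b"
      by (simp add: reach_edge)
    then show ?case
      using assms(2) by (intro exI[of _ A]) simp
  next
    case (insert e X)
    then obtain B where B: "A \<subseteq> B" "B \<subseteq> A \<union> X" "forest B"
      and reachB: "\<forall>a b. {a, b} \<in> A \<union> X \<longrightarrow> reach B a b"
      by blast
    show ?case
    proof (cases "\<exists>a b. e = {a, b} \<and> \<not> reach B a b")
      case True
      then obtain a b where e: "e = {a, b}" "\<not> reach B a b"
        by blast
      then have "e \<notin> B"
        using reach_edge[of a b B] by auto
      then have "forest (insert e B)"
        using forest_insert_iff[OF B(3)] e by simp
      moreover have "reach (insert e B) x y" if "{x, y} \<in> A \<union> insert e X" for x y
      proof (cases "{x, y} = e")
        case True
        then show ?thesis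
          by (simp add: reach_edge)
      next
        case False
        then have "reach B x y"
          using that reachB by blast
        then show ?thesis
          by (rule reach_mono) blast
      qed
      ultimately show ?thesis
        using B(1,2) by (intro exI[of _ "insert e B"]) blast
    next
      case False
      then have "\<forall>a b. {a, b} \<in> A \<union> insert e X \<longrightarrow> reach B a b"
        using reachB by blast
      then show ?thesis
        using B(1-3) by (intro exI[of _ B]) blast
    qed
  qed
  then show ?thesis
    using that by blast
qed

section \<open>Counting components\<close>

definition component :: "'v set \<Rightarrow> 'v set set \<Rightarrow> 'v \<Rightarrow> 'v set" where
  "component V A x = {y \<in> V. reach A x y}"

definition components :: "'v set \<Rightarrow> 'v set set \<Rightarrow> 'v set set" where
  "components V A = component V A ` V"

lemma component_eq_iff: "y \<in> V \<Longrightarrow> component V A x = component V A y \<longleftrightarrow> reach A x y"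
  unfolding component_def using reach_cong[of A x y] by (auto simp: set_eq_iff)

lemma card_components_empty: "card (components V {}) = card V"
proof -
  have "component V {} x = {x}" if "x \<in> V" for x
    using that reach_isolated[of "{}" x] by (auto simp: component_def)
  then have "components V {} = (\<lambda>x. {x}) ` V"
    unfolding components_def by simp
  then show ?thesis
    by (simp add: card_image)
qed

lemma card_components_connected:
  assumes "x \<in> V" "\<And>y. y \<in> V \<Longrightarrow> reach A x y"
  shows "card (components V A) = 1"
proof -
  have "component V A y = component V A x" if "y \<in> V" for y
    using that assms component_eq_iff[of x V A y] reach_sym by metis
  then have "components V A = {component V A x}"
    unfolding components_def using assms(1) by blast
  then show ?thesis
    by simp
qed

lemma component_insert_edge:
  "component V (insert {u, v} A) x =
     (if reach A x u \<or> reach A x v then component V A u \<union> component V A v else component V A x)"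
proof (cases "reach A x u \<or> reach A x v")
  case True
  then have "reach (insert {u, v} A) x y \<longleftrightarrow> reach A u y \<or> reach A v y" for y
    unfolding reach_insert_edge_iff by (metis reach_cong reach_sym)
  then show ?thesis
    using True by (auto simp: component_def)
next
  case False
  then have "reach (insert {u, v} A) x y \<longleftrightarrow> reach A x y" for y
    unfolding reach_insert_edge_iff by simp
  then show ?thesis
    using False by (simp add: component_def)
qed

lemma components_insert_edge:
  assumes "u \<in> V" "v \<in> V"
  shows "components V (insert {u, v} A) =
    insert (component V A u \<union> component V A v)
      (components V A - {component V A u, component V A v})"
proof -
  let ?K = "component V A"
  show ?thesis
  proof (intro equalityI subsetI)
    fix X
    assume "X \<in> components V (insert {u, v} A)"
    then obtain x where x: "x \<in> V" "X = component V (insert {u, v} A) x"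
      unfolding components_def by blast
    show "X \<in> insert (?K u \<union> ?K v) (components V A - {?K u, ?K v})"
    proof (cases "reach A x u \<or> reach A x v")
      case True
      then show ?thesis
        using x(2) by (simp add: component_insert_edge)
    next
      case False
      then have "?K x \<noteq> ?K u" "?K x \<noteq> ?K v"
        using component_eq_iff[of u V A x] component_eq_iff[of v V A x] assms by simp_all
      then show ?thesis
        using x False by (simp add: component_insert_edge components_def)
    qed
  next
    fix X
    assume X: "X \<in> insert (?K u \<union> ?K v) (components V A - {?K u, ?K v})"
    show "X \<in> components V (insert {u, v} A)"
    proof (cases "X = ?K u \<union> ?K v")
      case True
      then have "X = component V (insert {u, v} A) u"
        by (simp add: component_insert_edge)
      then show ?thesis
        using assms(1) by (simp add: components_def)
    next
      case False
      then obtain x where x: "x \<in> V" "X = ?K x" "?K x \<noteq> ?K u" "?K x \<noteq> ?K v"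
        using X unfolding components_def by blast
      then have "\<not> reach A x u" "\<not> reach A x v"
        using component_eq_iff[of u V A x] component_eq_iff[of v V A x] assms by simp_all
      then have "X = component V (insert {u, v} A) x"
        using x(2) by (simp add: component_insert_edge)
      then show ?thesis
        using x(1) by (simp add: components_def)
    qed
  qed
qed

lemma card_components_insert_edge:
  assumes "finite V" "u \<in> V" "v \<in> V" "\<not> reach A u v"
  shows "card (components V (insert {u, v} A)) + 1 = card (components V A)"
proof -
  let ?K = "component V A"
  have Kuv: "?K u \<noteq> ?K v"
    using component_eq_iff[of v V A u] assms(3,4) by simp
  have new: "?K u \<union> ?K v \<notin> components V A"
  proof
    assume "?K u \<union> ?K v \<in> components V A"
    then obtain z where z: "?K u \<union> ?K v = ?K z"
      unfolding components_def by blast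
    have "u \<in> ?K z" "v \<in> ?K z"
      unfolding z[symmetric] using assms(2,3) by (simp_all add: component_def)
    then have "reach A z u" "reach A z v"
      by (simp_all add: component_def)
    then show False
      using assms(4) by (meson reach_sym reach_trans)
  qed
  have sub: "{?K u, ?K v} \<subseteq> components V A"
    unfolding components_def using assms(2,3) by simp
  moreover have "finite (components V A)"
    unfolding components_def using assms(1) by simp
  ultimately have "card (components V (insert {u, v} A)) = Suc (card (components V A) - 2)"
    using new Kuv components_insert_edge[OF assms(2,3)]
    by (simp add: card_insert_disjoint card_Diff_subset)
  moreover have "card (components V A) \<ge> 2"
    using card_mono[OF \<open>finite (components V A)\<close> sub] Kuv by simp
  ultimately show ?thesis
    by simp
qed

lemma card_forest_add_components:
  assumes "simple_graph V A" "forest A"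
  shows "card A + card (components V A) = card V"
proof -
  have "finite A"
    using assms(1) by (rule simple_graph_finite_edges)
  then show ?thesis
    using assms
  proof (induction A rule: finite_induct)
    case empty
    show ?case
      by (simp add: card_components_empty)
  next
    case (insert e A)
    obtain a b where e: "e = {a, b}" "a \<in> V" "b \<in> V"
      using insert.prems(1) unfolding simple_graph_def by blast
    have "simple_graph V A" "forest A"
      using insert.prems simple_graph_subset forest_subset by blast+
    then have "card A + card (components V A) = card V"
      by (rule insert.IH)
    moreover have "\<not> reach A a b"
      using forestD[OF insert.prems(2), of a b] e(1) insert.hyps(2) by simp
    then have "card (components V (insert e A)) + 1 = card (components V A)"
      unfolding e(1) using insert.prems(1) e(2,3)
      by (intro card_components_insert_edge) (simp_all add: simple_graph_def)
    ultimately show ?case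
      using insert.hyps by simp
  qed
qed

section \<open>Spanning forests and the star of a vertex\<close>

definition star :: "'v set set \<Rightarrow> 'v \<Rightarrow> 'v set set" where
  "star E w = {e \<in> E. w \<in> e}"

lemma graphic_basis_reach_edge:
  assumes "graphic_basis E B" "{a, b} \<in> E"
  shows "reach B a b"
proof (cases "{a, b} \<in> B")
  case True
  then show ?thesis
    by (rule reach_edge)
next
  case False
  have "forest B" "\<not> forest (insert {a, b} B)"
    using assms False unfolding graphic_basis_def by auto
  then show ?thesis
    using forest_insert_iff[OF _ False] by simp
qed

lemma graphic_basisI:
  assumes "simple_graph V E" "B \<subseteq> E" "forest B" "\<And>a b. {a, b} \<in> E \<Longrightarrow> reach B a b"
  shows "graphic_basis E B"
  unfolding graphic_basis_def
proof (intro conjI ballI)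
  fix e
  assume e: "e \<in> E - B"
  then obtain a b where "e = {a, b}"
    using assms(1) unfolding simple_graph_def by blast
  then show "\<not> forest (insert e B)"
    using forest_insert_iff[OF assms(3)] assms(4) e by simp
qed (use assms(2,3) in simp_all)

lemma card_graphic_basis:
  assumes "simple_graph V E" "graph_connected V E" "x \<in> V" "graphic_basis E B"
  shows "card B + 1 = card V"
proof -
  have B: "B \<subseteq> E" "forest B"
    using assms(4) unfolding graphic_basis_def by simp_all
  have "reach B x y" if "y \<in> V" for y
  proof -
    have "reach E x y"
      using assms(2,3) that unfolding graph_connected_def by blast
    then show ?thesis
      by (rule reach_transfer) (rule graphic_basis_reach_edge[OF assms(4)])
  qed
  then have "card (components V B) = 1"
    by (intro card_components_connected[OF assms(3)])
  moreover have "card B + card (components V B) = card V"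
    using simple_graph_subset[OF assms(1) B(1)] B(2) by (rule card_forest_add_components)
  ultimately show ?thesis
    by simp
qed

lemma graphic_basis_meets_star:
  assumes "graphic_basis E B" "{w, y} \<in> E" "y \<noteq> w"
  shows "B \<inter> star E w \<noteq> {}"
proof
  assume "B \<inter> star E w = {}"
  then have "\<forall>e\<in>B. w \<notin> e"
    using assms(1) unfolding graphic_basis_def star_def by blast
  then have "\<not> reach B w y"
    using reach_isolated[of B w y] assms(3) by auto
  with graphic_basis_reach_edge[OF assms(1,2)] show False
    by simp
qed

lemma forest_star:
  assumes "simple_graph V E" "T \<subseteq> star E w"
  shows "forest T"
  unfolding forest_def
proof (intro ballI allI impI notI)
  fix g a b
  assume g: "g \<in> T" "g = {a, b}" and r: "reach (T - {g}) a b"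
  have "g \<in> E" "w \<in> g"
    using g(1) assms(2) by (auto simp: star_def)
  then obtain x where x: "g = {w, x}" "x \<noteq> w"
    by (rule simple_graph_edge_at[OF assms(1)])
  have "x \<notin> h" if h: "h \<in> T - {g}" for h
  proof -
    have "h \<in> E" "w \<in> h"
      using h assms(2) by (auto simp: star_def)
    then obtain y where "h = {w, y}"
      by (rule simple_graph_edge_at[OF assms(1)])
    then show ?thesis
      using h x by auto
  qed
  then have isolated: "reach (T - {g}) x z \<Longrightarrow> z = x" for z
    using reach_isolated[of "T - {g}" x z] by blast
  have "a = x \<and> b \<noteq> x \<or> b = x \<and> a \<noteq> x"
    using g(2) x by (auto simp: doubleton_eq_iff)
  then show False
    using isolated r reach_sym[OF r] by blast
qed

lemma graphic_basis_with_star: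
  assumes "simple_graph V E" "graph_connected (V - {w}) (edges_avoiding E w)"
    and "T \<subseteq> star E w" "T \<noteq> {}"
  obtains B where "graphic_basis E B" "B \<inter> star E w = T"
proof -
  let ?F = "edges_avoiding E w"
  have "finite ?F"
    using simple_graph_finite_edges[OF assms(1)] by (simp add: edges_avoiding_def)
  then obtain B where B: "T \<subseteq> B" "B \<subseteq> T \<union> ?F" "forest B"
    and reachB: "\<forall>a b. {a, b} \<in> T \<union> ?F \<longrightarrow> reach B a b"
    using forest_star[OF assms(1,3)] by (rule forest_extend)
  obtain t where t: "t \<in> T"
    using assms(4) by blast
  then have "t \<in> E" "w \<in> t"
    using assms(3) by (auto simp: star_def)
  then obtain y where y: "t = {w, y}" "y \<noteq> w" "y \<in> V"
    by (rule simple_graph_edge_at[OF assms(1)])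
  have wy: "reach B w y"
    using reachB t y(1) by blast
  have reach_w: "reach B w x" if "x \<in> V" "x \<noteq> w" for x
  proof -
    have "reach ?F y x"
      using assms(2) that y(2,3) unfolding graph_connected_def by blast
    then have "reach B y x"
      by (rule reach_transfer) (use reachB in blast)
    with wy show ?thesis
      by (rule reach_trans)
  qed
  have "reach B a b" if "{a, b} \<in> E" for a b
  proof (cases "w \<in> {a, b}")
    case True
    have "a \<noteq> b" "a \<in> V" "b \<in> V"
      using simple_graph_edge[OF assms(1) that] by simp_all
    then show ?thesis
      using True reach_w[of a] reach_w[of b] reach_sym by auto
  next
    case False
    then show ?thesis
      using that reachB by (simp add: edges_avoiding_def)
  qed
  moreover have "B \<subseteq> E"
    using B(2) assms(3) by (auto simp: star_def edges_avoiding_def)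
  ultimately have "graphic_basis E B"
    using assms(1) B(3) by (intro graphic_basisI)
  moreover have "B \<inter> star E w = T"
    using B(1,2) assms(3) by (auto simp: star_def edges_avoiding_def)
  ultimately show ?thesis
    by (rule that)
qed

lemma connected_star_nonempty:
  assumes "graph_connected V E" "w \<in> V" "x \<in> V" "x \<noteq> w"
  shows "star E w \<noteq> {}"
proof -
  have "reach E w x"
    using assms(1-3) unfolding graph_connected_def by blast
  moreover have "w \<noteq> x"
    using assms(4) by simp
  ultimately obtain y where "{w, y} \<in> E"
    by (rule reach_first_edge)
  then show ?thesis
    by (auto simp: star_def)
qed

lemma star_counts_of_graphic_bases:
  assumes "simple_graph V E" "graph_connected (V - {w}) (edges_avoiding E w)" "star E w \<noteq> {}"
  shows "(\<lambda>B. card (B \<inter> star E w)) ` {B. graphic_basis E B} = {1..degree E w}"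
proof -
  have fin: "finite (star E w)"
    using simple_graph_finite_edges[OF assms(1)] by (simp add: star_def)
  have deg: "degree E w = card (star E w)"
    by (simp add: degree_def star_def)
  obtain e where "e \<in> E" "w \<in> e"
    using assms(3) by (auto simp: star_def)
  then obtain y where y: "e = {w, y}" "y \<noteq> w"
    by (rule simple_graph_edge_at[OF assms(1)])
  show ?thesis
  proof (intro equalityI subsetI)
    fix j
    assume "j \<in> (\<lambda>B. card (B \<inter> star E w)) ` {B. graphic_basis E B}"
    then obtain B where B: "graphic_basis E B" "j = card (B \<inter> star E w)"
      by blast
    have "B \<inter> star E w \<noteq> {}"
      using graphic_basis_meets_star[OF B(1)] \<open>e \<in> E\<close> y by simp
    then have "1 \<le> j"
      using fin B(2) by (simp add: Suc_le_eq card_gt_0_iff)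
    moreover have "j \<le> degree E w"
      using fin B(2) deg by (simp add: card_mono)
    ultimately show "j \<in> {1..degree E w}"
      by simp
  next
    fix j
    assume j: "j \<in> {1..degree E w}"
    then obtain T where T: "T \<subseteq> star E w" "card T = j"
      using obtain_subset_with_card_n[of j "star E w"] deg by auto
    then have "T \<noteq> {}"
      using j by auto
    then obtain B where "graphic_basis E B" "B \<inter> star E w = T"
      by (rule graphic_basis_with_star[OF assms(1,2) T(1)])
    then show "j \<in> (\<lambda>B. card (B \<inter> star E w)) ` {B. graphic_basis E B}"
      using T(2) by force
  qed
qed

lemma sum_indicator_edges_avoiding:
  assumes "finite E" "B \<subseteq> E"
  shows "(\<Sum>e\<in>edges_avoiding E w. if e \<in> B then 1 else 0 :: real)
      = real (card B) - real (card (B \<inter> star E w))"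
proof -
  let ?F = "edges_avoiding E w"
  have "B = (?F \<inter> B) \<union> (B \<inter> star E w)" "(?F \<inter> B) \<inter> (B \<inter> star E w) = {}"
    using assms(2) by (auto simp: edges_avoiding_def star_def)
  moreover have "finite B"
    using assms by (rule finite_subset[rotated])
  ultimately have "card B = card (?F \<inter> B) + card (B \<inter> star E w)"
    by (metis card_Un_disjoint finite_Int)
  moreover have "finite ?F"
    using assms(1) by (simp add: edges_avoiding_def)
  then have "(\<Sum>e\<in>?F. if e \<in> B then 1 else 0 :: real) = real (card (?F \<inter> B))"
    by (simp add: sum.inter_restrict[symmetric])
  ultimately show ?thesis
    by simp
qed

theorem proposition5p4:
  fixes V :: "'v set" and E :: "'v set set" and w :: 'v and k :: nat
  assumes "simple_graph V E"
    and "biconnected V E"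
    and "w \<in> V"
    and "m_flacet E graphic_rank (edges_avoiding E w)"
  shows "graphic_k_level E (edges_avoiding E w) k \<longleftrightarrow> degree E w = k"
proof -
  have conn: "graph_connected V E" and conn_w: "graph_connected (V - {w}) (edges_avoiding E w)"
    and "card V \<ge> 3"
    using assms(2,3) unfolding biconnected_def by auto
  then have "\<not> V \<subseteq> {w}"
    using card_mono[of "{w}" V] by auto
  then obtain x where x: "x \<in> V" "x \<noteq> w"
    by blast
  let ?bases = "{B. graphic_basis E B}"
  let ?level = "\<lambda>B. \<Sum>e\<in>edges_avoiding E w. if e \<in> B then 1 else 0 :: real"
  have "?level ` ?bases = (\<lambda>j. real (card V - 1) - real j) ` ((\<lambda>B. card (B \<inter> star E w)) ` ?bases)"
    unfolding image_image
  proof (rule image_cong[OF refl])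
    fix B
    assume "B \<in> ?bases"
    then have "B \<subseteq> E" "card B + 1 = card V"
      using card_graphic_basis[OF assms(1) conn assms(3)] by (auto simp: graphic_basis_def)
    then show "?level B = real (card V - 1) - real (card (B \<inter> star E w))"
      using sum_indicator_edges_avoiding[OF simple_graph_finite_edges[OF assms(1)]] by simp
  qed
  also have "(\<lambda>B. card (B \<inter> star E w)) ` ?bases = {1..degree E w}"
    using star_counts_of_graphic_bases[OF assms(1) conn_w connected_star_nonempty[OF conn assms(3) x]] .
  finally have "card (?level ` ?bases) = degree E w"
    by (simp add: card_image inj_on_def)
  then show ?thesis
    unfolding graphic_k_level_def by simp
qed

end
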